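(* Let $D=(E,\mathcal{F})$ be a proper set system, $a,b\in E$ with $a\neq b$, and let $A\subseteq E$ satisfy $|A\cap\{a,b\}|=0$ or $|A\cap\{a,b\}|=2$. Then $\omega(D* A)=\omega(\widetilde{D}_{ab}* A)$.
   Context: A set system $D=(E,\mathcal{F})$ is a finite set $E$ together with a collection $\mathcal{F}$ of subsets of $E$ (feasible sets); proper means $\mathcal{F}\neq\emptyset$. $\triangle$ denotes symmetric difference. For $A\subseteq E$, the twist is $D*A=(E,\{A\triangle X: X\in\mathcal{F}\})$. The width $\omega(D)$ of a proper set system is the size of a largest feasible set minus the size of a smallest feasible set. For distinct $a,b\in E$, the result of handle sliding of $a$ over $b$ is $\widetilde{D}_{ab}=(E,\widetilde{\mathcal{F}}_{ab})$ with $\widetilde{\mathcal{F}}_{ab}=\mathcal{F}\triangle\{F\cup\{a\}\mid F\cup\{b\}\in\mathcal{F},\ F\subseteq E\setminus\{a,b\}\}$. *)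

theory Defs
  imports Main
begin

definition symdiff :: "'a set \<Rightarrow> 'a set \<Rightarrow> 'a set" (infixl "\<triangle>" 70) where
  "X \<triangle> Y = (X - Y) \<union> (Y - X)"

definition set_system :: "'a set \<Rightarrow> 'a set set \<Rightarrow> bool" where
  "set_system E \<F> \<longleftrightarrow> finite E \<and> \<F> \<subseteq> Pow E"

definition proper_set_system :: "'a set \<Rightarrow> 'a set set \<Rightarrow> bool" where
  "proper_set_system E \<F> \<longleftrightarrow> set_system E \<F> \<and> \<F> \<noteq> {}"

definition twist :: "'a set set \<Rightarrow> 'a set \<Rightarrow> 'a set set" where
  "twist \<F> A = (\<lambda>X. A \<triangle> X) ` \<F>"

definition width :: "'a set set \<Rightarrow> nat" where
  "width \<F> = Max (card ` \<F>) - Min (card ` \<F>)"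

definition handle_slide :: "'a set \<Rightarrow> 'a set set \<Rightarrow> 'a \<Rightarrow> 'a \<Rightarrow> 'a set set" where
  "handle_slide E \<F> a b =
     \<F> \<triangle> {F \<union> {a} | F. F \<union> {b} \<in> \<F> \<and> F \<subseteq> E - {a, b}}"

end

theory Submission
  imports Defs "HOL-Combinatorics.Transposition"
begin

text \<open>The width of a twist only depends on the set of sizes of its feasible sets. Every set
  F \<union> {a} added by the handle slide has the twin F \<union> {b}, which is feasible, is not touched by
  the slide, and (when A contains both or none of a and b) has a twist of the same size, because
  the transposition of a and b maps one twisted set onto the other. Hence sliding neither
  creates nor destroys any size of a twisted feasible set. The transposition argument needs no
  finiteness.\<close>

lemma image_symdiff:
  assumes "inj f"
  shows "f ` (X \<triangle> Y) = f ` X \<triangle> f ` Y"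
  using assms by (auto simp: symdiff_def image_Un image_set_diff)

lemma card_symdiff_insert_transpose:
  assumes "a \<notin> F" and "b \<notin> F" and "a \<in> A \<longleftrightarrow> b \<in> A"
  shows "card (A \<triangle> insert a F) = card (A \<triangle> insert b F)"
proof -
  have "transpose a b ` insert b F = insert a F"
    using assms(1,2) by (auto simp: transpose_def)
  then have "transpose a b ` (A \<triangle> insert b F) = A \<triangle> insert a F"
    using assms(3) by (simp add: image_symdiff inj_transpose)
  then show ?thesis
    by (metis card_image inj_on_transpose)
qed

lemma image_symdiff_eq_if_twin:
  assumes twin: "\<And>X. X \<in> S \<Longrightarrow> \<exists>Y \<in> \<F> - S. f Y = f X"
  shows "f ` (\<F> \<triangle> S) = f ` \<F>"
proof -
  have untouched: "\<F> - S \<subseteq> \<F> \<triangle> S" and toggled: "\<F> \<triangle> S \<subseteq> \<F> \<union> S"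
    by (auto simp: symdiff_def)
  have "f X \<in> f ` (\<F> - S)" if "X \<in> \<F> \<union> S" for X
  proof (cases "X \<in> S")
    case True
    then show ?thesis using twin by (metis imageI)
  next
    case False
    then show ?thesis using that by blast
  qed
  then have "f ` (\<F> \<union> S) \<subseteq> f ` (\<F> - S)" by blast
  then show ?thesis
    using untouched toggled by (blast intro: image_mono)
qed

lemma card_image_twist_handle_slide:
  assumes "a \<noteq> b" and "a \<in> A \<longleftrightarrow> b \<in> A"
  shows "card ` twist (handle_slide E \<F> a b) A = card ` twist \<F> A"
proof -
  define S where "S = {F \<union> {a} | F. F \<union> {b} \<in> \<F> \<and> F \<subseteq> E - {a, b}}"
  have "(\<lambda>X. card (A \<triangle> X)) ` (\<F> \<triangle> S) = (\<lambda>X. card (A \<triangle> X)) ` \<F>"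
  proof (rule image_symdiff_eq_if_twin)
    fix X assume "X \<in> S"
    then obtain F where X: "X = insert a F" and "insert b F \<in> \<F>" and F: "F \<subseteq> E - {a, b}"
      by (auto simp: S_def)
    moreover have "insert b F \<notin> S"
      using F assms(1) by (auto simp: S_def)
    moreover have "card (A \<triangle> insert b F) = card (A \<triangle> X)"
      using X F by (metis Diff_iff insertCI subsetD card_symdiff_insert_transpose assms(2))
    ultimately show "\<exists>Y \<in> \<F> - S. card (A \<triangle> Y) = card (A \<triangle> X)"
      by blast
  qed
  then show ?thesis
    by (simp add: twist_def handle_slide_def S_def image_image)
qed

lemma mem_iff_mem_if_card_inter_doubleton_0_or_2:
  assumes "a \<noteq> b" and "card (A \<inter> {a, b}) = 0 \<or> card (A \<inter> {a, b}) = 2"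
  shows "a \<in> A \<longleftrightarrow> b \<in> A"
  using assms by (cases "a \<in> A"; cases "b \<in> A") auto

theorem proposition3p2:
  fixes E :: "'a set" and \<F> :: "'a set set" and a b :: 'a and A :: "'a set"
  assumes "proper_set_system E \<F>"
    and "a \<in> E" and "b \<in> E" and "a \<noteq> b"
    and "A \<subseteq> E"
    and "card (A \<inter> {a, b}) = 0 \<or> card (A \<inter> {a, b}) = 2"
  shows "width (twist \<F> A) = width (twist (handle_slide E \<F> a b) A)"
proof -
  have "a \<in> A \<longleftrightarrow> b \<in> A"
    using assms(4,6) by (rule mem_iff_mem_if_card_inter_doubleton_0_or_2)
  then show ?thesis
    using assms(4) by (simp add: width_def card_image_twist_handle_slide)
qed

end
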